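(* Let $Y$ be a latent label taking one of two values $y_1, y_2$ in a label space $\mathcal{Y}$, with known class probability $p = P(Y = y_1)$, and let $g:\mathcal{Y}\to\{\pm1\}^d$ be an isometric injective embedding. Let $\lambda^a,\lambda^b,\lambda^c$ be any three labeling functions (random elements of $\mathcal{Y}$) that are conditionally independent given $Y$, and suppose $n$ i.i.d. samples of $(\lambda^a,\lambda^b,\lambda^c)$ are observed ($Y$ is not observed). Assume the signs (i.e. the correct root of the quadratic) can be correctly recovered. Then for any $\delta>0$, with probability at least $1-\delta$, the quadratic triplet method recovers $\alpha_i = P(g(\lambda^a)_i=1\mid Y=y)$, $\beta_i = P(g(\lambda^b)_i=1\mid Y=y)$, $\gamma_i = P(g(\lambda^c)_i=1\mid Y=y)$ up to error $O\big((\ln(2d^2/\delta)/(2n))^{1/4}\big)$, simultaneously for all $i\in[d]$.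
   Context: Quadratic triplet method: for each coordinate $i\in[d]$, form the empirical frequencies $\hat O_{a,b}=\hat P(g(\lambda^a)_i=1,g(\lambda^b)_i=1)$, $\hat O_{a,c}$, $\hat O_{b,c}$ (defined analogously) and $\hat\ell_a=\hat P(g(\lambda^a)_i=1)$, $\hat\ell_b$, $\hat\ell_c$ from the $n$ samples. By conditional independence, the population quantities satisfy, with $y$ one of the two label values and $p'=P(Y=y)$, the system $O_{u,v} = p'\,\alpha^u\alpha^v + (1-p')\,\frac{\ell_u - p'\alpha^u}{1-p'}\cdot\frac{\ell_v-p'\alpha^v}{1-p'}$ for the three pairs $(u,v)\in\{(a,b),(a,c),(b,c)\}$, where $\alpha^a=\alpha_i,\alpha^b=\beta_i,\alpha^c=\gamma_i$ (using $P(g(\lambda^u)_i=1\mid Y\neq y)=(\ell_u-p'\alpha^u)/(1-p')$). The method plugs the empirical quantities into this system, eliminates two unknowns to obtain a single quadratic equation in one unknown, solves it by the quadratic formula (choosing the correct root), and back-substitutes to obtain estimates of $\alpha_i,\beta_i,\gamma_i$. *)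

theory Defs
  imports "HOL-Probability.Probability"
begin

text \<open>One draw of the generative model is a tuple (Y, lambda_a, lambda_b, lambda_c)
  of the latent label and the outputs of the three labeling functions.\<close>

definition lat :: "'y \<times> 'y \<times> 'y \<times> 'y \<Rightarrow> 'y" where
  "lat s = fst s"
definition lab_a :: "'y \<times> 'y \<times> 'y \<times> 'y \<Rightarrow> 'y" where
  "lab_a s = fst (snd s)"
definition lab_b :: "'y \<times> 'y \<times> 'y \<times> 'y \<Rightarrow> 'y" where
  "lab_b s = fst (snd (snd s))"
definition lab_c :: "'y \<times> 'y \<times> 'y \<times> 'y \<Rightarrow> 'y" where
  "lab_c s = snd (snd (snd s))"

text \<open>Hamming distance on {+-1}^d, vectors represented as nat => int on coordinates < d.\<close>
definition hamming :: "nat \<Rightarrow> (nat \<Rightarrow> int) \<Rightarrow> (nat \<Rightarrow> int) \<Rightarrow> nat" where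
  "hamming d u v = card {i. i < d \<and> u i \<noteq> v i}"

definition cond_indep3 :: "('y \<times> 'y \<times> 'y \<times> 'y) pmf \<Rightarrow> bool" where
  "cond_indep3 D \<longleftrightarrow> (\<forall>y a b c.
     pmf D (y, a, b, c) * (pmf (map_pmf lat D) y)^2 =
       pmf (map_pmf (\<lambda>s. (lat s, lab_a s)) D) (y, a) *
       pmf (map_pmf (\<lambda>s. (lat s, lab_b s)) D) (y, b) *
       pmf (map_pmf (\<lambda>s. (lat s, lab_c s)) D) (y, c))"

definition cprob :: "('y \<times> 'y \<times> 'y \<times> 'y) pmf \<Rightarrow> 'y \<Rightarrow> ('y \<times> 'y \<times> 'y \<times> 'y \<Rightarrow> bool) \<Rightarrow> real" where
  "cprob D y P = measure_pmf.prob D {s. lat s = y \<and> P s} / measure_pmf.prob D {s. lat s = y}"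

definition emp :: "nat \<Rightarrow> (nat \<Rightarrow> bool) \<Rightarrow> real" where
  "emp n P = real (card {j. j < n \<and> P j}) / real n"

text \<open>The quadratic triplet method at coordinate i, from the n observed triples
  obs j = (lambda_a, lambda_b, lambda_c) of the j-th sample, with known p' = P(Y = y),
  and the correct root selected by the sign sg (the sign of alpha_i - l_a).
  Plugging the empirical quantities into the system
  O_uv = p' a_u a_v + (l_u - p' a_u)(l_v - p' a_v)/(1-p'), i.e.
  O_uv - l_u l_v = r (a_u - l_u)(a_v - l_v) with r = p'/(1-p'),
  eliminating a_b, a_c gives the quadratic (a_a - l_a)^2 = C_ab C_ac / (r C_bc)
  in a_a; its root (real part, if the discriminant is negative) with the chosen sign is
  taken, and a_b, a_c are obtained by back-substitution.\<close>
definition triplet_est ::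
  "('y \<Rightarrow> nat \<Rightarrow> int) \<Rightarrow> real \<Rightarrow> nat \<Rightarrow> (nat \<Rightarrow> 'y \<times> 'y \<times> 'y) \<Rightarrow> nat \<Rightarrow> real
     \<Rightarrow> real \<times> real \<times> real" where
  "triplet_est g p' n obs i sg =
    (let la = emp n (\<lambda>j. g (fst (obs j)) i = 1);
         lb = emp n (\<lambda>j. g (fst (snd (obs j))) i = 1);
         lc = emp n (\<lambda>j. g (snd (snd (obs j))) i = 1);
         Oab = emp n (\<lambda>j. g (fst (obs j)) i = 1 \<and> g (fst (snd (obs j))) i = 1);
         Oac = emp n (\<lambda>j. g (fst (obs j)) i = 1 \<and> g (snd (snd (obs j))) i = 1);
         Obc = emp n (\<lambda>j. g (fst (snd (obs j))) i = 1 \<and> g (snd (snd (obs j))) i = 1);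
         Cab = Oab - la * lb;
         Cac = Oac - la * lc;
         Cbc = Obc - lb * lc;
         r = p' / (1 - p');
         K = Cab * Cac / (r * Cbc);
         xa = sg * sqrt (max 0 K);
         xb = Cab / (r * xa);
         xc = Cac / (r * xa)
     in (la + xa, lb + xb, lc + xc))"

end

theory Submission
  imports Defs
begin

(* Under conditional independence given Y, every population covariance of two labelers at a
   coordinate factors as O_uv - l_u l_v = r (alpha_u - l_u) (alpha_v - l_v) with r = p'/(1 - p').
   Hence the triplet estimator is an explicit algebraic function of the six first and second
   moments which, as long as every labeler is informative (alpha_u ~= l_u), is locally Lipschitz
   at the population moments: moments estimated within eta give accuracies within M eta.
   Hoeffding's inequality and a union bound over the 6 d empirical moments give eta = 2 sqrt t
   with t = ln (2 d^2 / delta) / (2 n), and 2 M sqrt t <= (2 M + 1) t^(1/4) once t <= 1; the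
   argument thus even yields the rate sqrt t. *)

type_synonym 'y sample = "'y \<times> 'y \<times> 'y \<times> 'y"

lemma map_pmf_eq_bernoulli_pmf:
  "map_pmf P D = bernoulli_pmf (measure_pmf.prob D {s. P s})"
proof (rule pmf_eqI)
  fix b :: bool
  have "measure_pmf.prob D {s. \<not> P s} = 1 - measure_pmf.prob D {s. P s}"
    using measure_pmf.prob_compl[of "{s. P s}" D] by (simp add: set_diff_eq)
  then show "pmf (map_pmf P D) b = pmf (bernoulli_pmf (measure_pmf.prob D {s. P s})) b"
    by (cases b) (auto simp: pmf_map vimage_def)
qed

lemma prob_emp_deviation_ge:
  fixes D :: "'a pmf" and P :: "'a \<Rightarrow> bool"
  assumes n: "0 < n" and \<epsilon>: "0 \<le> \<epsilon>"
  shows "measure_pmf.prob (Pi_pmf {..<n} dflt (\<lambda>_. D))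
      {S. \<epsilon> \<le> \<bar>emp n (\<lambda>j. P (S j)) - measure_pmf.prob D {s. P s}\<bar>}
    \<le> 2 * exp (- 2 * real n * \<epsilon>\<^sup>2)"
proof -
  define q where "q = measure_pmf.prob D {s. P s}"
  have q: "q \<in> {0..1}"
    unfolding q_def by auto
  have coins: "map_pmf ((\<circ>) P) (Pi_pmf {..<n} dflt (\<lambda>_. D)) = Pi_pmf {..<n} (P dflt) (\<lambda>_. bernoulli_pmf q)"
    using Pi_pmf_map[of "{..<n}" P dflt "P dflt" "\<lambda>_. D"] by (simp add: map_pmf_eq_bernoulli_pmf q_def)
  have binomial: "binomial_pmf n q =
      map_pmf (\<lambda>f. card {j \<in> {..<n}. f j}) (Pi_pmf {..<n} (P dflt) (\<lambda>_. bernoulli_pmf q))"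
    by (rule binomial_pmf_altdef') (use q in auto)
  have "measure_pmf.prob (Pi_pmf {..<n} dflt (\<lambda>_. D)) {S. \<epsilon> \<le> \<bar>emp n (\<lambda>j. P (S j)) - q\<bar>}
      = measure_pmf.prob (map_pmf (\<lambda>f. card {j \<in> {..<n}. f j}) (map_pmf ((\<circ>) P) (Pi_pmf {..<n} dflt (\<lambda>_. D))))
          {k. \<epsilon> \<le> \<bar>real k / real n - q\<bar>}"
    by (simp add: emp_def vimage_def o_def)
  also have "\<dots> = measure_pmf.prob (binomial_pmf n q) {k. \<epsilon> \<le> \<bar>real k / real n - q\<bar>}"
    by (simp only: coins binomial)
  also have "\<dots> \<le> 2 * exp (- 2 * real n * \<epsilon>\<^sup>2)"
    using binomial_distribution.prob_abs_ge'[of q n \<epsilon>] q n \<epsilon>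
    by (simp add: binomial_distribution_def)
  finally show ?thesis
    by (simp add: q_def)
qed

lemma prob_emp_deviation_finite_family:
  fixes D :: "'a pmf" and \<E> :: "('a \<Rightarrow> bool) set"
  assumes "finite \<E>" and "0 < n" and "0 \<le> \<epsilon>"
  shows "measure_pmf.prob (Pi_pmf {..<n} dflt (\<lambda>_. D))
      {S. \<exists>P\<in>\<E>. \<epsilon> \<le> \<bar>emp n (\<lambda>j. P (S j)) - measure_pmf.prob D {s. P s}\<bar>}
    \<le> 2 * card \<E> * exp (- 2 * real n * \<epsilon>\<^sup>2)"
proof -
  let ?\<mu> = "measure_pmf.prob (Pi_pmf {..<n} dflt (\<lambda>_. D))"
  let ?bad = "\<lambda>P. {S. \<epsilon> \<le> \<bar>emp n (\<lambda>j. P (S j)) - measure_pmf.prob D {s. P s}\<bar>}"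
  have "?\<mu> {S. \<exists>P\<in>\<E>. \<epsilon> \<le> \<bar>emp n (\<lambda>j. P (S j)) - measure_pmf.prob D {s. P s}\<bar>} = ?\<mu> (\<Union>P\<in>\<E>. ?bad P)"
    by (rule arg_cong[where f = ?\<mu>]) auto
  also have "\<dots> \<le> (\<Sum>P\<in>\<E>. ?\<mu> (?bad P))"
    using assms(1) by (rule measure_pmf.finite_measure_subadditive_finite) auto
  also have "\<dots> \<le> (\<Sum>P\<in>\<E>. 2 * exp (- 2 * real n * \<epsilon>\<^sup>2))"
    using assms(2,3) by (intro sum_mono prob_emp_deviation_ge)
  finally show ?thesis
    by simp
qed

definition approx_lin :: "'z set \<Rightarrow> ('z \<Rightarrow> real) \<Rightarrow> ('z \<Rightarrow> 'a::real_normed_vector) \<Rightarrow> 'a \<Rightarrow> bool" where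
  "approx_lin Z E X x \<longleftrightarrow>
     (\<exists>M e. 0 \<le> M \<and> 0 < e \<and> (\<forall>z\<in>Z. E z \<le> e \<longrightarrow> norm (X z - x) \<le> M * E z))"

lemma approx_linI:
  assumes "0 \<le> M" "0 < e" "\<And>z. z \<in> Z \<Longrightarrow> E z \<le> e \<Longrightarrow> norm (X z - x) \<le> M * E z"
  shows "approx_lin Z E X x"
  unfolding approx_lin_def using assms by blast

lemma approx_lin_of_le:
  assumes "\<And>z. z \<in> Z \<Longrightarrow> norm (X z - x) \<le> E z"
  shows "approx_lin Z E X x"
  using assms by (intro approx_linI[of 1 1]) auto

lemma approx_linE:
  assumes "approx_lin Z E X x"
  obtains M e where "0 \<le> M" "0 < e" "\<And>z. z \<in> Z \<Longrightarrow> E z \<le> e \<Longrightarrow> norm (X z - x) \<le> M * E z"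
  using assms unfolding approx_lin_def by blast

lemma approx_lin_by_sum:
  assumes "approx_lin Z E X x" "approx_lin Z E Y y"
    and "\<And>z. z \<in> Z \<Longrightarrow> norm (W z - w) \<le> norm (X z - x) + norm (Y z - y)"
  shows "approx_lin Z E W w"
proof -
  obtain M1 e1 where 1: "0 \<le> M1" "0 < e1" "\<And>z. z \<in> Z \<Longrightarrow> E z \<le> e1 \<Longrightarrow> norm (X z - x) \<le> M1 * E z"
    using assms(1) by (elim approx_linE) blast
  obtain M2 e2 where 2: "0 \<le> M2" "0 < e2" "\<And>z. z \<in> Z \<Longrightarrow> E z \<le> e2 \<Longrightarrow> norm (Y z - y) \<le> M2 * E z"
    using assms(2) by (elim approx_linE) blast
  show ?thesis
  proof (rule approx_linI[of "M1 + M2" "min e1 e2"])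
    fix z assume z: "z \<in> Z" "E z \<le> min e1 e2"
    have "norm (W z - w) \<le> norm (X z - x) + norm (Y z - y)"
      using assms(3)[OF z(1)] .
    also have "\<dots> \<le> M1 * E z + M2 * E z"
      using 1(3)[OF z(1)] 2(3)[OF z(1)] z(2) by (intro add_mono) auto
    finally show "norm (W z - w) \<le> (M1 + M2) * E z"
      by (simp add: distrib_right)
  qed (use 1(1,2) 2(1,2) in auto)
qed

lemma approx_lin_add:
  "approx_lin Z E X x \<Longrightarrow> approx_lin Z E Y y \<Longrightarrow> approx_lin Z E (\<lambda>z. X z + Y z) (x + y)"
  by (erule approx_lin_by_sum, assumption) (rule norm_diff_triangle_ineq)

lemma approx_lin_diff:
  assumes "approx_lin Z E X x" "approx_lin Z E Y y"
  shows "approx_lin Z E (\<lambda>z. X z - Y z) (x - y)"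
proof (rule approx_lin_by_sum[OF assms])
  fix z
  have "X z - Y z - (x - y) = (X z - x) - (Y z - y)"
    by (simp add: algebra_simps)
  then show "norm (X z - Y z - (x - y)) \<le> norm (X z - x) + norm (Y z - y)"
    by (metis norm_triangle_ineq4)
qed

lemma approx_lin_Pair:
  "approx_lin Z E X x \<Longrightarrow> approx_lin Z E Y y \<Longrightarrow> approx_lin Z E (\<lambda>z. (X z, Y z)) (x, y)"
  by (erule approx_lin_by_sum, assumption) (simp add: norm_Pair_le)

lemma approx_lin_cmult:
  fixes X :: "'z \<Rightarrow> real"
  assumes "approx_lin Z E X x"
  shows "approx_lin Z E (\<lambda>z. c * X z) (c * x)"
proof -
  obtain M e where M: "0 \<le> M" "0 < e" "\<And>z. z \<in> Z \<Longrightarrow> E z \<le> e \<Longrightarrow> \<bar>X z - x\<bar> \<le> M * E z"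
    using assms by (auto elim: approx_linE)
  show ?thesis
  proof (rule approx_linI[of "\<bar>c\<bar> * M" e])
    fix z assume "z \<in> Z" "E z \<le> e"
    then show "norm (c * X z - c * x) \<le> (\<bar>c\<bar> * M) * E z"
      using mult_left_mono[OF M(3), of z "\<bar>c\<bar>"]
      by (simp add: abs_mult right_diff_distrib[symmetric] mult.assoc)
  qed (use M(1,2) in auto)
qed

lemma approx_lin_mult:
  fixes X Y :: "'z \<Rightarrow> real"
  assumes "approx_lin Z E X x" "approx_lin Z E Y y" and nonneg: "\<And>z. z \<in> Z \<Longrightarrow> 0 \<le> E z"
  shows "approx_lin Z E (\<lambda>z. X z * Y z) (x * y)"
proof -
  obtain M1 e1 where 1: "0 \<le> M1" "0 < e1" "\<And>z. z \<in> Z \<Longrightarrow> E z \<le> e1 \<Longrightarrow> \<bar>X z - x\<bar> \<le> M1 * E z"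
    using assms(1) by (auto elim: approx_linE)
  obtain M2 e2 where 2: "0 \<le> M2" "0 < e2" "\<And>z. z \<in> Z \<Longrightarrow> E z \<le> e2 \<Longrightarrow> \<bar>Y z - y\<bar> \<le> M2 * E z"
    using assms(2) by (auto elim: approx_linE)
  define M where "M = M1 * (\<bar>y\<bar> + M2) + \<bar>x\<bar> * M2"
  have "0 \<le> M"
    using 1(1) 2(1) by (simp add: M_def)
  then show ?thesis
  proof (rule approx_linI[of M "min 1 (min e1 e2)"])
    fix z assume z: "z \<in> Z" "E z \<le> min 1 (min e1 e2)"
    have small: "E z \<le> 1" "E z \<le> e1" "E z \<le> e2"
      using z(2) by auto
    have dX: "\<bar>X z - x\<bar> \<le> M1 * E z" and dY: "\<bar>Y z - y\<bar> \<le> M2 * E z"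
      using 1(3)[OF z(1) small(2)] 2(3)[OF z(1) small(3)] by simp_all
    have "M2 * E z \<le> M2"
      using small(1) 2(1) nonneg[OF z(1)] by (simp add: mult_left_le)
    then have bY: "\<bar>Y z\<bar> \<le> \<bar>y\<bar> + M2"
      using dY by linarith
    have "X z * Y z - x * y = (X z - x) * Y z + x * (Y z - y)"
      by (simp add: algebra_simps)
    then have "\<bar>X z * Y z - x * y\<bar> \<le> \<bar>X z - x\<bar> * \<bar>Y z\<bar> + \<bar>x\<bar> * \<bar>Y z - y\<bar>"
      by (metis abs_mult abs_triangle_ineq)
    also have "\<dots> \<le> (M1 * E z) * (\<bar>y\<bar> + M2) + \<bar>x\<bar> * (M2 * E z)"
      using dX dY bY 1(1) nonneg[OF z(1)] by (intro add_mono mult_mono mult_left_mono) auto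
    also have "\<dots> = M * E z"
      by (simp add: M_def algebra_simps)
    finally show "norm (X z * Y z - x * y) \<le> M * E z"
      by simp
  qed (use 1(2) 2(2) in auto)
qed

lemma approx_lin_inverse:
  fixes X :: "'z \<Rightarrow> real"
  assumes "approx_lin Z E X x" "x \<noteq> 0" and nonneg: "\<And>z. z \<in> Z \<Longrightarrow> 0 \<le> E z"
  shows "approx_lin Z E (\<lambda>z. 1 / X z) (1 / x)"
proof -
  obtain M e where M: "0 \<le> M" "0 < e" "\<And>z. z \<in> Z \<Longrightarrow> E z \<le> e \<Longrightarrow> \<bar>X z - x\<bar> \<le> M * E z"
    using assms(1) by (auto elim: approx_linE)
  have x: "0 < \<bar>x\<bar>"
    using assms(2) by simp
  define e' where "e' = min e (\<bar>x\<bar> / (2 * (M + 1)))"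
  show ?thesis
  proof (rule approx_linI[of "2 * M / \<bar>x\<bar>\<^sup>2" e'])
    fix z assume z: "z \<in> Z" "E z \<le> e'"
    have dX: "\<bar>X z - x\<bar> \<le> M * E z"
      using M(3) z by (simp add: e'_def)
    have "M * E z \<le> (M + 1) * (\<bar>x\<bar> / (2 * (M + 1)))"
      using z M(1) nonneg[OF z(1)] by (intro mult_mono) (auto simp: e'_def)
    also have "\<dots> = \<bar>x\<bar> / 2"
      using M(1) by (simp add: field_simps)
    finally have bX: "\<bar>x\<bar> / 2 \<le> \<bar>X z\<bar>"
      using dX by linarith
    then have "X z \<noteq> 0"
      using x by auto
    then have "\<bar>1 / X z - 1 / x\<bar> = \<bar>X z - x\<bar> / (\<bar>X z\<bar> * \<bar>x\<bar>)"
      using assms(2) by (simp add: field_simps abs_mult abs_minus_commute)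
    also have "\<dots> \<le> (M * E z) / ((\<bar>x\<bar> / 2) * \<bar>x\<bar>)"
      using dX bX x by (intro frac_le mult_mono) (auto simp: zero_less_mult_iff)
    also have "\<dots> = (2 * M / \<bar>x\<bar>\<^sup>2) * E z"
      by (simp add: power2_eq_square field_simps)
    finally show "norm (1 / X z - 1 / x) \<le> (2 * M / \<bar>x\<bar>\<^sup>2) * E z"
      by simp
  qed (use M(1,2) x in \<open>auto simp: e'_def\<close>)
qed

lemma approx_lin_divide:
  fixes X Y :: "'z \<Rightarrow> real"
  assumes "approx_lin Z E X x" "approx_lin Z E Y y" "y \<noteq> 0" and "\<And>z. z \<in> Z \<Longrightarrow> 0 \<le> E z"
  shows "approx_lin Z E (\<lambda>z. X z / Y z) (x / y)"
  using approx_lin_mult[OF assms(1) approx_lin_inverse[OF assms(2-4)] assms(4)] by simp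

lemma abs_sqrt_diff_le:
  fixes w x :: real
  assumes "0 \<le> w" "0 < x"
  shows "\<bar>sqrt w - sqrt x\<bar> \<le> \<bar>w - x\<bar> / sqrt x"
proof -
  have "w - x = (sqrt w - sqrt x) * (sqrt w + sqrt x)"
    using assms by (simp add: algebra_simps)
  then have "\<bar>w - x\<bar> = \<bar>sqrt w - sqrt x\<bar> * (sqrt w + sqrt x)"
    using assms by (simp add: abs_mult)
  also have "\<dots> \<ge> \<bar>sqrt w - sqrt x\<bar> * sqrt x"
    using assms by (intro mult_left_mono) auto
  finally show ?thesis
    using assms by (simp add: pos_le_divide_eq)
qed

lemma approx_lin_sqrt:
  fixes X :: "'z \<Rightarrow> real"
  assumes "approx_lin Z E X x" "0 < x"
  shows "approx_lin Z E (\<lambda>z. sqrt (max 0 (X z))) (sqrt x)"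
proof -
  obtain M e where M: "0 \<le> M" "0 < e" "\<And>z. z \<in> Z \<Longrightarrow> E z \<le> e \<Longrightarrow> \<bar>X z - x\<bar> \<le> M * E z"
    using assms(1) by (auto elim: approx_linE)
  show ?thesis
  proof (rule approx_linI[of "M / sqrt x" e])
    fix z assume z: "z \<in> Z" "E z \<le> e"
    have "\<bar>sqrt (max 0 (X z)) - sqrt x\<bar> \<le> \<bar>max 0 (X z) - x\<bar> / sqrt x"
      using assms(2) by (intro abs_sqrt_diff_le) auto
    also have "\<dots> \<le> \<bar>X z - x\<bar> / sqrt x"
      using assms(2) by (intro divide_right_mono) auto
    also have "\<dots> \<le> (M * E z) / sqrt x"
      using M(3)[OF z] assms(2) by (intro divide_right_mono) auto
    finally show "norm (sqrt (max 0 (X z)) - sqrt x) \<le> (M / sqrt x) * E z"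
      by simp
  qed (use M(1,2) assms(2) in auto)
qed

lemma approx_lin_finite_uniform:
  assumes "finite I" and "\<And>i. i \<in> I \<Longrightarrow> approx_lin Z E (X i) (x i)"
    and nonneg: "\<And>z. z \<in> Z \<Longrightarrow> 0 \<le> E z"
  shows "\<exists>M e. 0 \<le> M \<and> 0 < e \<and> (\<forall>z\<in>Z. E z \<le> e \<longrightarrow> (\<forall>i\<in>I. norm (X i z - x i) \<le> M * E z))"
  using assms(1,2)
proof (induction I rule: finite_induct)
  case empty
  show ?case
    by (rule exI[of _ 0], rule exI[of _ 1]) auto
next
  case (insert i I)
  obtain M e where M: "0 \<le> M" "0 < e" "\<forall>z\<in>Z. E z \<le> e \<longrightarrow> (\<forall>j\<in>I. norm (X j z - x j) \<le> M * E z)"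
    using insert by blast
  obtain M' e' where M': "0 \<le> M'" "0 < e'" "\<And>z. z \<in> Z \<Longrightarrow> E z \<le> e' \<Longrightarrow> norm (X i z - x i) \<le> M' * E z"
    using insert.prems[of i] by (auto elim: approx_linE)
  have bound: "norm (X j z - x j) \<le> max M M' * E z"
    if z: "z \<in> Z" "E z \<le> min e e'" and j: "j \<in> insert i I" for z j
  proof -
    have "M * E z \<le> max M M' * E z" "M' * E z \<le> max M M' * E z"
      using nonneg[OF z(1)] by (simp_all add: mult_right_mono)
    then show ?thesis
      using M(3) M'(3)[OF z(1)] z j by fastforce
  qed
  show ?case
    by (rule exI[of _ "max M M'"], rule exI[of _ "min e e'"]) (use bound M(1,2) M'(1,2) in auto)
qed

definition triplet_solve ::
  "real \<Rightarrow> real \<Rightarrow> real \<Rightarrow> real \<Rightarrow> real \<Rightarrow> real \<Rightarrow> real \<Rightarrow> real \<Rightarrow> real \<times> real \<times> real" where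
  "triplet_solve r sg la lb lc oab oac obc =
    (let xa = sg * sqrt (max 0 ((oab - la * lb) * (oac - la * lc) / (r * (obc - lb * lc))))
     in (la + xa, lb + (oab - la * lb) / (r * xa), lc + (oac - la * lc) / (r * xa)))"

lemma triplet_est_eq_triplet_solve:
  "triplet_est g p' n obs i sg =
    triplet_solve (p' / (1 - p')) sg
      (emp n (\<lambda>j. g (fst (obs j)) i = 1))
      (emp n (\<lambda>j. g (fst (snd (obs j))) i = 1))
      (emp n (\<lambda>j. g (snd (snd (obs j))) i = 1))
      (emp n (\<lambda>j. g (fst (obs j)) i = 1 \<and> g (fst (snd (obs j))) i = 1))
      (emp n (\<lambda>j. g (fst (obs j)) i = 1 \<and> g (snd (snd (obs j))) i = 1))
      (emp n (\<lambda>j. g (fst (snd (obs j))) i = 1 \<and> g (snd (snd (obs j))) i = 1))"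
  unfolding triplet_est_def triplet_solve_def Let_def ..

lemma approx_lin_signed_root:
  fixes CAB CAC CBC :: "'z \<Rightarrow> real"
  assumes nonneg: "\<And>z. z \<in> Z \<Longrightarrow> 0 \<le> E z"
    and "approx_lin Z E CAB (r * xa * xb)" "approx_lin Z E CAC (r * xa * xc)"
    and "approx_lin Z E CBC (r * xb * xc)"
    and "r \<noteq> 0" "xa \<noteq> 0" "xb \<noteq> 0" "xc \<noteq> 0"
  shows "approx_lin Z E (\<lambda>z. sgn xa * sqrt (max 0 (CAB z * CAC z / (r * CBC z)))) xa"
proof -
  have "r * xa * xb * (r * xa * xc) / (r * (r * xb * xc)) = xa\<^sup>2"
    using assms(5-8) by (simp add: power2_eq_square)
  moreover have "r * (r * xb * xc) \<noteq> 0"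
    using assms(5,7,8) by simp
  ultimately have "approx_lin Z E (\<lambda>z. CAB z * CAC z / (r * CBC z)) (xa\<^sup>2)"
    using approx_lin_divide[OF approx_lin_mult[OF assms(2,3) nonneg] approx_lin_cmult[OF assms(4), of r] _ nonneg]
    by simp
  from approx_lin_cmult[OF approx_lin_sqrt[OF this], of "sgn xa"] assms(6)
  show ?thesis
    by (simp add: sgn_mult_abs)
qed

lemma approx_lin_triplet_solve:
  fixes LA LB LC OAB OAC OBC :: "'z \<Rightarrow> real"
  assumes nonneg: "\<And>z. z \<in> Z \<Longrightarrow> 0 \<le> E z"
    and LA: "approx_lin Z E LA la" and LB: "approx_lin Z E LB lb" and LC: "approx_lin Z E LC lc"
    and OAB: "approx_lin Z E OAB oab" and OAC: "approx_lin Z E OAC oac"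
    and OBC: "approx_lin Z E OBC obc"
    and r: "r \<noteq> 0" and informative: "\<alpha> \<noteq> la" "\<beta> \<noteq> lb" "\<gamma> \<noteq> lc"
    and cov_ab: "oab - la * lb = r * (\<alpha> - la) * (\<beta> - lb)"
    and cov_ac: "oac - la * lc = r * (\<alpha> - la) * (\<gamma> - lc)"
    and cov_bc: "obc - lb * lc = r * (\<beta> - lb) * (\<gamma> - lc)"
  shows "approx_lin Z E
    (\<lambda>z. triplet_solve r (sgn (\<alpha> - la)) (LA z) (LB z) (LC z) (OAB z) (OAC z) (OBC z)) (\<alpha>, \<beta>, \<gamma>)"
proof -
  note mult = approx_lin_mult[OF _ _ nonneg] and divide = approx_lin_divide[OF _ _ _ nonneg]
  have CAB: "approx_lin Z E (\<lambda>z. OAB z - LA z * LB z) (r * (\<alpha> - la) * (\<beta> - lb))"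
    using approx_lin_diff[OF OAB mult[OF LA LB]] cov_ab by simp
  have CAC: "approx_lin Z E (\<lambda>z. OAC z - LA z * LC z) (r * (\<alpha> - la) * (\<gamma> - lc))"
    using approx_lin_diff[OF OAC mult[OF LA LC]] cov_ac by simp
  have CBC: "approx_lin Z E (\<lambda>z. OBC z - LB z * LC z) (r * (\<beta> - lb) * (\<gamma> - lc))"
    using approx_lin_diff[OF OBC mult[OF LB LC]] cov_bc by simp
  have deviations: "\<alpha> - la \<noteq> 0" "\<beta> - lb \<noteq> 0" "\<gamma> - lc \<noteq> 0"
    using informative by simp_all
  note XA = approx_lin_signed_root[OF nonneg CAB CAC CBC r deviations]
  note rXA = approx_lin_cmult[OF XA, of r]
  have "approx_lin Z E (\<lambda>z. LA z + sgn (\<alpha> - la) * sqrt (max 0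
      ((OAB z - LA z * LB z) * (OAC z - LA z * LC z) / (r * (OBC z - LB z * LC z))))) \<alpha>"
    using approx_lin_add[OF LA XA] by simp
  moreover have "approx_lin Z E (\<lambda>z. LB z + (OAB z - LA z * LB z) / (r * (sgn (\<alpha> - la) * sqrt (max 0
      ((OAB z - LA z * LB z) * (OAC z - LA z * LC z) / (r * (OBC z - LB z * LC z))))))) \<beta>"
    using approx_lin_add[OF LB divide[OF CAB rXA]] r deviations by simp
  moreover have "approx_lin Z E (\<lambda>z. LC z + (OAC z - LA z * LC z) / (r * (sgn (\<alpha> - la) * sqrt (max 0
      ((OAB z - LA z * LB z) * (OAC z - LA z * LC z) / (r * (OBC z - LB z * LC z))))))) \<gamma>"
    using approx_lin_add[OF LC divide[OF CAC rXA]] r deviations by simp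
  ultimately show ?thesis
    unfolding triplet_solve_def Let_def by (intro approx_lin_Pair)
qed

lemma measure_cond_pmf:
  assumes "set_pmf D \<inter> A \<noteq> {}"
  shows "measure_pmf.prob (cond_pmf D A) B = measure_pmf.prob D (A \<inter> B) / measure_pmf.prob D A"
  unfolding cond_pmf.rep_eq[OF assms]
  using emeasure_measure_pmf_not_zero[OF assms]
  by (subst measure_uniform_measure) (auto simp: measure_pmf.emeasure_eq_measure Int_commute)

lemma measure_pair_pmf_Times:
  "measure_pmf.prob (pair_pmf M N) (A \<times> B) = measure_pmf.prob M A * measure_pmf.prob N B"
proof -
  have "(A \<times> B) \<inter> set_pmf (pair_pmf M N) = (A \<inter> set_pmf M) \<times> (B \<inter> set_pmf N)"
    by auto
  then have "measure_pmf.prob (pair_pmf M N) (A \<times> B)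
      = measure_pmf.prob (pair_pmf M N) ((A \<inter> set_pmf M) \<times> (B \<inter> set_pmf N))"
    by (metis measure_Int_set_pmf)
  also have "\<dots> = measure_pmf.prob M (A \<inter> set_pmf M) * measure_pmf.prob N (B \<inter> set_pmf N)"
    by (rule measure_pmf_prob_product) (auto intro: countable_subset[OF _ countable_set_pmf])
  finally show ?thesis
    by (simp add: measure_Int_set_pmf)
qed

lemma cprob_eq_measure_cond_pmf:
  fixes D :: "'y sample pmf"
  assumes "0 < measure_pmf.prob D {s. lat s = w}"
  shows "cprob D w P = measure_pmf.prob (cond_pmf D {s. lat s = w}) {s. P s}"
proof -
  have "set_pmf D \<inter> {s. lat s = w} \<noteq> {}"
    using assms by (auto simp: measure_pmf_zero_iff[symmetric] Int_commute)
  then show ?thesis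
    unfolding cprob_def by (simp add: measure_cond_pmf Int_def)
qed

lemma cond_pmf_labels_eq_pair_pmf:
  fixes D :: "'y sample pmf"
  assumes CI: "cond_indep3 D" and pos: "0 < measure_pmf.prob D {s. lat s = w}"
  defines "C \<equiv> cond_pmf D {s. lat s = w}"
  shows "map_pmf (\<lambda>s. (lab_a s, lab_b s, lab_c s)) C =
    pair_pmf (map_pmf lab_a C) (pair_pmf (map_pmf lab_b C) (map_pmf lab_c C))"
proof (rule pmf_eqI)
  fix abc :: "'y \<times> 'y \<times> 'y"
  obtain a b c where abc: "abc = (a, b, c)"
    by (cases abc) auto
  define P where "P = measure_pmf.prob D {s. lat s = w}"
  have cond: "measure_pmf.prob C {s. Q s} = measure_pmf.prob D {s. lat s = w \<and> Q s} / P" for Q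
    using cprob_eq_measure_cond_pmf[OF pos, of Q] by (simp add: C_def P_def cprob_def)
  have joint: "pmf (map_pmf (\<lambda>s. (lat s, L s)) D) (w, v) = measure_pmf.prob D {s. lat s = w \<and> L s = v}"
    for L :: "'y sample \<Rightarrow> 'y" and v
    by (simp add: pmf_map vimage_def)
  have P: "0 < P"
    using pos by (simp add: P_def)
  have indep: "pmf D (w, a, b, c) * P\<^sup>2 = measure_pmf.prob D {s. lat s = w \<and> lab_a s = a}
      * measure_pmf.prob D {s. lat s = w \<and> lab_b s = b} * measure_pmf.prob D {s. lat s = w \<and> lab_c s = c}"
    using CI unfolding cond_indep3_def joint by (simp add: P_def pmf_map vimage_def)
  have marginal: "pmf (map_pmf L C) v = measure_pmf.prob D {s. lat s = w \<and> L s = v} / P" for L v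
    using cond[of "\<lambda>s. L s = v"] by (simp add: pmf_map vimage_def)
  have "{s. lat s = w \<and> (lab_a s, lab_b s, lab_c s) = (a, b, c)} = {(w, a, b, c)}"
    by (auto simp: lat_def lab_a_def lab_b_def lab_c_def)
  then have "pmf (map_pmf (\<lambda>s. (lab_a s, lab_b s, lab_c s)) C) abc = pmf D (w, a, b, c) / P"
    using cond[of "\<lambda>s. (lab_a s, lab_b s, lab_c s) = (a, b, c)"]
    by (simp add: abc pmf_map vimage_def measure_pmf_single)
  also have "\<dots> = pmf D (w, a, b, c) * P\<^sup>2 / P ^ 3"
    using P by (simp add: power2_eq_square power3_eq_cube)
  also have "\<dots> = pmf (pair_pmf (map_pmf lab_a C) (pair_pmf (map_pmf lab_b C) (map_pmf lab_c C))) abc"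
    unfolding indep abc pmf_pair marginal by (simp add: power3_eq_cube)
  finally show "pmf (map_pmf (\<lambda>s. (lab_a s, lab_b s, lab_c s)) C) abc =
      pmf (pair_pmf (map_pmf lab_a C) (pair_pmf (map_pmf lab_b C) (map_pmf lab_c C))) abc" .
qed

lemma cprob_labels_product:
  fixes D :: "'y sample pmf"
  assumes CI: "cond_indep3 D" and pos: "0 < measure_pmf.prob D {s. lat s = w}"
  shows "cprob D w (\<lambda>s. A (lab_a s) \<and> B (lab_b s) \<and> C (lab_c s)) =
    cprob D w (\<lambda>s. A (lab_a s)) * cprob D w (\<lambda>s. B (lab_b s)) * cprob D w (\<lambda>s. C (lab_c s))"
proof -
  let ?C = "cond_pmf D {s. lat s = w}"
  have "cprob D w (\<lambda>s. A (lab_a s) \<and> B (lab_b s) \<and> C (lab_c s))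
      = measure_pmf.prob (map_pmf (\<lambda>s. (lab_a s, lab_b s, lab_c s)) ?C) ({a. A a} \<times> {b. B b} \<times> {c. C c})"
    by (simp add: cprob_eq_measure_cond_pmf[OF pos] vimage_def)
  also have "\<dots> = measure_pmf.prob (map_pmf lab_a ?C) {a. A a} * measure_pmf.prob (map_pmf lab_b ?C) {b. B b}
      * measure_pmf.prob (map_pmf lab_c ?C) {c. C c}"
    by (simp add: cond_pmf_labels_eq_pair_pmf[OF CI pos] measure_pair_pmf_Times)
  finally show ?thesis
    by (simp add: cprob_eq_measure_cond_pmf[OF pos] vimage_def)
qed

lemma cprob_label_pairs_product:
  fixes D :: "'y sample pmf"
  assumes CI: "cond_indep3 D" and pos: "0 < measure_pmf.prob D {s. lat s = w}"
  shows "cprob D w (\<lambda>s. A (lab_a s) \<and> B (lab_b s)) = cprob D w (\<lambda>s. A (lab_a s)) * cprob D w (\<lambda>s. B (lab_b s))"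
    and "cprob D w (\<lambda>s. A (lab_a s) \<and> C (lab_c s)) = cprob D w (\<lambda>s. A (lab_a s)) * cprob D w (\<lambda>s. C (lab_c s))"
    and "cprob D w (\<lambda>s. B (lab_b s) \<and> C (lab_c s)) = cprob D w (\<lambda>s. B (lab_b s)) * cprob D w (\<lambda>s. C (lab_c s))"
proof -
  have "cprob D w (\<lambda>_. True) = 1"
    using pos by (simp add: cprob_def)
  then show "cprob D w (\<lambda>s. A (lab_a s) \<and> B (lab_b s)) = cprob D w (\<lambda>s. A (lab_a s)) * cprob D w (\<lambda>s. B (lab_b s))"
    and "cprob D w (\<lambda>s. A (lab_a s) \<and> C (lab_c s)) = cprob D w (\<lambda>s. A (lab_a s)) * cprob D w (\<lambda>s. C (lab_c s))"
    and "cprob D w (\<lambda>s. B (lab_b s) \<and> C (lab_c s)) = cprob D w (\<lambda>s. B (lab_b s)) * cprob D w (\<lambda>s. C (lab_c s))"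
    using cprob_labels_product[OF CI pos, of A B "\<lambda>_. True"] cprob_labels_product[OF CI pos, of A "\<lambda>_. True" C]
      cprob_labels_product[OF CI pos, of "\<lambda>_. True" B C]
    by simp_all
qed

lemma prob_lat_other:
  fixes D :: "'y sample pmf"
  assumes "y1 \<noteq> y2" and "\<forall>s\<in>set_pmf D. lat s \<in> {y1, y2}"
  shows "measure_pmf.prob D {s. lat s = y2} = 1 - measure_pmf.prob D {s. lat s = y1}"
proof -
  have "{s. lat s = y2} \<inter> set_pmf D = (UNIV - {s. lat s = y1}) \<inter> set_pmf D"
    using assms by auto
  then have "measure_pmf.prob D {s. lat s = y2} = measure_pmf.prob D (UNIV - {s. lat s = y1})"
    by (metis measure_Int_set_pmf)
  then show ?thesis
    using measure_pmf.prob_compl[of "{s. lat s = y1}" D] by simp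
qed

lemma mixture_cov_identity:
  fixes q uy uz vy vz :: real
  assumes "q \<noteq> 1"
  shows "(q * uy * vy + (1 - q) * uz * vz) - (q * uy + (1 - q) * uz) * (q * vy + (1 - q) * vz)
    = q / (1 - q) * (uy - (q * uy + (1 - q) * uz)) * (vy - (q * vy + (1 - q) * vz))"
  using assms by (simp add: field_simps)

locale two_class_model =
  fixes D :: "'y sample pmf" and y z :: 'y and q :: real
  assumes cond_indep: "cond_indep3 D"
    and y_neq_z: "y \<noteq> z"
    and lat_range: "\<forall>s\<in>set_pmf D. lat s \<in> {y, z}"
    and prob_lat_y: "measure_pmf.prob D {s. lat s = y} = q"
    and q_pos: "0 < q" and q_less_1: "q < 1"
begin

lemma prob_split_lat:
  "measure_pmf.prob D {s. P s} =
    measure_pmf.prob D {s. lat s = y \<and> P s} + measure_pmf.prob D {s. lat s = z \<and> P s}"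
proof -
  have "measure_pmf.prob D {s. P s} = measure_pmf.prob D ({s. P s} \<inter> set_pmf D)"
    by (rule measure_Int_set_pmf[symmetric])
  also have "{s. P s} \<inter> set_pmf D =
      ({s. lat s = y \<and> P s} \<inter> set_pmf D) \<union> ({s. lat s = z \<and> P s} \<inter> set_pmf D)"
    using lat_range by auto
  also have "measure_pmf.prob D \<dots> = measure_pmf.prob D ({s. lat s = y \<and> P s} \<inter> set_pmf D)
      + measure_pmf.prob D ({s. lat s = z \<and> P s} \<inter> set_pmf D)"
    by (rule measure_pmf.finite_measure_Union) (use y_neq_z in auto)
  finally show ?thesis
    by (simp add: measure_Int_set_pmf)
qed

lemma prob_lat_z: "measure_pmf.prob D {s. lat s = z} = 1 - q"
  using prob_split_lat[of "\<lambda>_. True"] prob_lat_y by simp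

lemma prob_lat_pos: "w \<in> {y, z} \<Longrightarrow> 0 < measure_pmf.prob D {s. lat s = w}"
  using prob_lat_y prob_lat_z q_pos q_less_1 by auto

lemma prob_eq_mixture:
  "measure_pmf.prob D {s. P s} = q * cprob D y P + (1 - q) * cprob D z P"
  using prob_split_lat[of P] prob_lat_y prob_lat_z q_pos q_less_1 by (simp add: cprob_def)

lemma cov_eq_scaled_deviations:
  assumes "\<And>w. w \<in> {y, z} \<Longrightarrow> cprob D w (\<lambda>s. U s \<and> V s) = cprob D w U * cprob D w V"
  shows "measure_pmf.prob D {s. U s \<and> V s} - measure_pmf.prob D {s. U s} * measure_pmf.prob D {s. V s}
    = q / (1 - q) * (cprob D y U - measure_pmf.prob D {s. U s}) * (cprob D y V - measure_pmf.prob D {s. V s})"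
  using mixture_cov_identity[where uy = "cprob D y U" and uz = "cprob D z U"
      and vy = "cprob D y V" and vz = "cprob D z V"] q_less_1
  by (simp add: prob_eq_mixture[of U] prob_eq_mixture[of V] prob_eq_mixture[of "\<lambda>s. U s \<and> V s"]
      assms mult.assoc)

end

definition coord_events :: "('y \<Rightarrow> nat \<Rightarrow> int) \<Rightarrow> nat \<Rightarrow> ('y sample \<Rightarrow> bool) set" where
  "coord_events g i =
    (let A = \<lambda>s. g (lab_a s) i = 1; B = \<lambda>s. g (lab_b s) i = 1; C = \<lambda>s. g (lab_c s) i = 1
     in set [A, B, C, \<lambda>s. A s \<and> B s, \<lambda>s. A s \<and> C s, \<lambda>s. B s \<and> C s])"

definition moments_close ::
  "'y sample pmf \<Rightarrow> ('y \<Rightarrow> nat \<Rightarrow> int) \<Rightarrow> nat \<Rightarrow> real \<Rightarrow> nat \<Rightarrow> (nat \<Rightarrow> 'y sample) \<Rightarrow> bool" where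
  "moments_close D g d \<eta> n S \<longleftrightarrow>
    (\<forall>i<d. \<forall>P\<in>coord_events g i. \<bar>emp n (\<lambda>j. P (S j)) - measure_pmf.prob D {s. P s}\<bar> \<le> \<eta>)"

lemma card_coord_events_le: "card (coord_events g i) \<le> 6"
  unfolding coord_events_def Let_def by (rule order_trans[OF card_length]) simp

lemma prob_moments_close_ge:
  assumes "0 < n" and "0 \<le> \<eta>"
  shows "1 - 12 * real d * exp (- 2 * real n * \<eta>\<^sup>2)
    \<le> measure_pmf.prob (Pi_pmf {..<n} dflt (\<lambda>_. D)) {S. moments_close D g d \<eta> n S}"
proof -
  let ?\<mu> = "measure_pmf.prob (Pi_pmf {..<n} dflt (\<lambda>_. D))"
  let ?\<E> = "\<Union>i<d. coord_events g i"
  have finite: "finite ?\<E>"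
    by (auto simp: coord_events_def)
  have "card ?\<E> \<le> (\<Sum>i<d. card (coord_events g i))"
    by (rule card_UN_le) simp
  also have "\<dots> \<le> (\<Sum>i<d. 6)"
    by (intro sum_mono card_coord_events_le)
  finally have card: "card ?\<E> \<le> 6 * d"
    by simp
  have "?\<mu> (UNIV - {S. moments_close D g d \<eta> n S})
      \<le> ?\<mu> {S. \<exists>P\<in>?\<E>. \<eta> \<le> \<bar>emp n (\<lambda>j. P (S j)) - measure_pmf.prob D {s. P s}\<bar>}"
    by (intro measure_pmf.finite_measure_mono) (auto simp: moments_close_def not_le intro: less_imp_le)
  also have "\<dots> \<le> 2 * card ?\<E> * exp (- 2 * real n * \<eta>\<^sup>2)"
    using finite assms by (rule prob_emp_deviation_finite_family)
  also have "\<dots> \<le> 12 * real d * exp (- 2 * real n * \<eta>\<^sup>2)"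
    using card by (intro mult_right_mono) auto
  finally show ?thesis
    using measure_pmf.prob_compl[of "{S. moments_close D g d \<eta> n S}" "Pi_pmf {..<n} dflt (\<lambda>_. D)"]
    by simp
qed

lemma mult_sqrt_le_powr_quarter:
  fixes M t :: real
  assumes "0 \<le> M" "0 \<le> t" "t \<le> 1"
  shows "M * (2 * sqrt t) \<le> (2 * M + 1) * t powr (1/4)"
proof -
  have "sqrt t \<le> t powr (1/4)"
  proof (cases "t = 0")
    case False
    then have "sqrt t = t powr (1/2)"
      using assms by (simp add: powr_half_sqrt)
    also have "\<dots> \<le> t powr (1/4)"
      using assms False by (intro powr_mono') auto
    finally show ?thesis .
  qed simp
  then have "(2 * M) * sqrt t \<le> (2 * M + 1) * t powr (1/4)"
    using assms by (intro mult_mono) auto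
  then show ?thesis
    by simp
qed

text \<open>For the deviation 2 sqrt t each of the 6 d Hoeffding bounds is (\<delta> / (2 d^2))^4,
  small enough to survive the union bound.\<close>
lemma moment_union_bound_le:
  fixes d n :: nat and \<delta> :: real
  assumes n: "0 < n" and \<delta>: "0 < \<delta>" "\<delta> < 1"
  defines "t \<equiv> ln (2 * real d ^ 2 / \<delta>) / (2 * real n)"
  shows "0 \<le> t \<and> 12 * real d * exp (- 2 * real n * (2 * sqrt t)\<^sup>2) \<le> \<delta>"
proof (cases "d = 0")
  case True
  then show ?thesis
    using \<delta> by (simp add: t_def)
next
  case False
  define w where "w = 2 * real d ^ 2 / \<delta>"
  have d: "1 \<le> real d" "1 \<le> real d ^ 2"
    using False by (simp_all add: one_le_power)
  have "\<delta> < real d ^ 2"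
    using d(2) \<delta>(2) by linarith
  then have w: "2 < w"
    using \<delta>(1) by (simp add: w_def field_simps)
  have t: "0 < t"
    using w n by (simp add: t_def w_def)
  have "exp (- 2 * real n * (2 * sqrt t)\<^sup>2) = exp (- (4 * ln w))"
    using t n by (simp add: t_def w_def power2_eq_square field_simps)
  also have "\<dots> = 1 / w ^ 4"
    using w exp_of_nat_mult[of 4 "ln w"] by (simp add: exp_minus inverse_eq_divide)
  finally have "12 * real d * exp (- 2 * real n * (2 * sqrt t)\<^sup>2) = 12 * real d / w ^ 4"
    by simp
  also have "\<dots> \<le> 2 * real d ^ 2 * w ^ 3 / w ^ 4"
  proof (intro divide_right_mono)
    have "(2::real) ^ 3 \<le> w ^ 3"
      using w by (intro power_mono) auto
    have "12 * real d \<le> 2 * real d ^ 2 * 8"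
      using d(1) by (simp add: power2_eq_square)
    also have "\<dots> \<le> 2 * real d ^ 2 * w ^ 3"
      using \<open>2 ^ 3 \<le> w ^ 3\<close> by (intro mult_left_mono) auto
    finally show "12 * real d \<le> 2 * real d ^ 2 * w ^ 3" .
  qed simp
  also have "\<dots> = \<delta>"
    using w \<delta> False by (simp add: w_def field_simps power_numeral_reduce)
  finally show ?thesis
    using t by simp
qed

lemma prob_moments_close_rate:
  fixes d n :: nat and \<delta> :: real
  assumes n: "0 < n" and \<delta>: "0 < \<delta>" "\<delta> < 1"
  defines "t \<equiv> ln (2 * real d ^ 2 / \<delta>) / (2 * real n)"
  shows "0 \<le> t"
    and "1 - \<delta> \<le> measure_pmf.prob (Pi_pmf {..<n} dflt (\<lambda>_. D)) {S. moments_close D g d (2 * sqrt t) n S}"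
  using moment_union_bound_le[OF n \<delta>, of d, folded t_def] prob_moments_close_ge[OF n, of "2 * sqrt t" d dflt D g]
  by auto

lemma abs_components_le_of_norm_le:
  fixes v :: "real \<times> real \<times> real"
  assumes "norm (v - (a, b, c)) \<le> r"
  shows "\<bar>fst v - a\<bar> \<le> r \<and> \<bar>fst (snd v) - b\<bar> \<le> r \<and> \<bar>snd (snd v) - c\<bar> \<le> r"
proof -
  obtain a' b' c' where v: "v - (a, b, c) = (a', b', c')"
    by (cases "v - (a, b, c)") auto
  have "norm a' \<le> norm (a', b', c')" "norm b' \<le> norm (b', c')" "norm c' \<le> norm (b', c')"
      "norm (b', c') \<le> norm (a', b', c')"
    by (rule norm_fst_le norm_snd_le)+
  moreover have "fst v - a = a'" "fst (snd v) - b = b'" "snd (snd v) - c = c'"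
    using arg_cong[OF v, of fst] arg_cong[OF v, of "\<lambda>x. fst (snd x)"] arg_cong[OF v, of "\<lambda>x. snd (snd x)"]
    by simp_all
  ultimately show ?thesis
    using assms v by auto
qed

definition triplet_recovers ::
  "'y sample pmf \<Rightarrow> ('y \<Rightarrow> nat \<Rightarrow> int) \<Rightarrow> nat \<Rightarrow> 'y \<Rightarrow> real \<Rightarrow> nat \<Rightarrow> real \<Rightarrow> (nat \<Rightarrow> 'y sample) \<Rightarrow> bool"
  where
  "triplet_recovers D g d y p' n bnd S \<longleftrightarrow> (\<forall>i<d.
    let \<alpha> = cprob D y (\<lambda>s. g (lab_a s) i = 1);
        \<beta> = cprob D y (\<lambda>s. g (lab_b s) i = 1);
        \<gamma> = cprob D y (\<lambda>s. g (lab_c s) i = 1);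
        est = triplet_est g p' n (\<lambda>j. snd (S j)) i
          (sgn (\<alpha> - measure_pmf.prob D {s. g (lab_a s) i = 1}))
    in \<bar>fst est - \<alpha>\<bar> \<le> bnd \<and> \<bar>fst (snd est) - \<beta>\<bar> \<le> bnd \<and> \<bar>snd (snd est) - \<gamma>\<bar> \<le> bnd)"

lemma triplet_recovers_mono:
  "triplet_recovers D g d y p' n bnd S \<Longrightarrow> bnd \<le> bnd' \<Longrightarrow> triplet_recovers D g d y p' n bnd' S"
  unfolding triplet_recovers_def Let_def by fastforce

context two_class_model
begin

lemma approx_lin_triplet_est:
  fixes g :: "'y \<Rightarrow> nat \<Rightarrow> int" and N :: "'w \<Rightarrow> nat" and S :: "'w \<Rightarrow> nat \<Rightarrow> 'y sample"
  assumes informative: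
      "cprob D y (\<lambda>s. g (lab_a s) i = 1) \<noteq> measure_pmf.prob D {s. g (lab_a s) i = 1}"
      "cprob D y (\<lambda>s. g (lab_b s) i = 1) \<noteq> measure_pmf.prob D {s. g (lab_b s) i = 1}"
      "cprob D y (\<lambda>s. g (lab_c s) i = 1) \<noteq> measure_pmf.prob D {s. g (lab_c s) i = 1}"
    and close: "\<And>w P. w \<in> Z \<Longrightarrow> P \<in> coord_events g i \<Longrightarrow>
      \<bar>emp (N w) (\<lambda>j. P (S w j)) - measure_pmf.prob D {s. P s}\<bar> \<le> E w"
    and nonneg: "\<And>w. w \<in> Z \<Longrightarrow> 0 \<le> E w"
  shows "approx_lin Z E
    (\<lambda>w. triplet_est g q (N w) (\<lambda>j. snd (S w j)) i
      (sgn (cprob D y (\<lambda>s. g (lab_a s) i = 1) - measure_pmf.prob D {s. g (lab_a s) i = 1})))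
    (cprob D y (\<lambda>s. g (lab_a s) i = 1), cprob D y (\<lambda>s. g (lab_b s) i = 1),
     cprob D y (\<lambda>s. g (lab_c s) i = 1))"
proof -
  define A B C where "A = (\<lambda>s. g (lab_a s) i = 1)" and "B = (\<lambda>s. g (lab_b s) i = 1)"
    and "C = (\<lambda>s. g (lab_c s) i = 1)"
  have emp: "approx_lin Z E (\<lambda>w. emp (N w) (\<lambda>j. P (S w j))) (measure_pmf.prob D {s. P s})"
    if "P \<in> coord_events g i" for P
    using close[OF _ that] by (intro approx_lin_of_le) simp
  have indep: "cprob D w (\<lambda>s. A s \<and> B s) = cprob D w A * cprob D w B"
      "cprob D w (\<lambda>s. A s \<and> C s) = cprob D w A * cprob D w C"
      "cprob D w (\<lambda>s. B s \<and> C s) = cprob D w B * cprob D w C"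
    if "w \<in> {y, z}" for w
    using cprob_label_pairs_product[OF cond_indep prob_lat_pos[OF that], of "\<lambda>v. g v i = 1" "\<lambda>v. g v i = 1"]
    by (simp_all add: A_def B_def C_def)
  have events: "A \<in> coord_events g i" "B \<in> coord_events g i" "C \<in> coord_events g i"
      "(\<lambda>s. A s \<and> B s) \<in> coord_events g i" "(\<lambda>s. A s \<and> C s) \<in> coord_events g i"
      "(\<lambda>s. B s \<and> C s) \<in> coord_events g i"
    unfolding coord_events_def Let_def A_def[symmetric] B_def[symmetric] C_def[symmetric] by simp_all
  have r: "q / (1 - q) \<noteq> 0"
    using q_pos q_less_1 by simp
  have "approx_lin Z E
    (\<lambda>w. triplet_solve (q / (1 - q)) (sgn (cprob D y A - measure_pmf.prob D {s. A s}))
      (emp (N w) (\<lambda>j. A (S w j))) (emp (N w) (\<lambda>j. B (S w j))) (emp (N w) (\<lambda>j. C (S w j)))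
      (emp (N w) (\<lambda>j. A (S w j) \<and> B (S w j))) (emp (N w) (\<lambda>j. A (S w j) \<and> C (S w j)))
      (emp (N w) (\<lambda>j. B (S w j) \<and> C (S w j))))
    (cprob D y A, cprob D y B, cprob D y C)"
    using nonneg emp[OF events(1)] emp[OF events(2)] emp[OF events(3)] emp[OF events(4)]
      emp[OF events(5)] emp[OF events(6)] r informative[folded A_def B_def C_def]
      cov_eq_scaled_deviations[OF indep(1)] cov_eq_scaled_deviations[OF indep(2)]
      cov_eq_scaled_deviations[OF indep(3)]
    by (rule approx_lin_triplet_solve)
  then show ?thesis
    by (simp add: triplet_est_eq_triplet_solve A_def B_def C_def lab_a_def lab_b_def lab_c_def)
qed

lemma triplet_est_uniform_error:
  fixes g :: "'y \<Rightarrow> nat \<Rightarrow> int"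
  assumes informative: "\<forall>i<d.
      cprob D y (\<lambda>s. g (lab_a s) i = 1) \<noteq> measure_pmf.prob D {s. g (lab_a s) i = 1} \<and>
      cprob D y (\<lambda>s. g (lab_b s) i = 1) \<noteq> measure_pmf.prob D {s. g (lab_b s) i = 1} \<and>
      cprob D y (\<lambda>s. g (lab_c s) i = 1) \<noteq> measure_pmf.prob D {s. g (lab_c s) i = 1}"
  shows "\<exists>M e. 0 \<le> M \<and> 0 < e \<and> (\<forall>n \<eta> S. 0 \<le> \<eta> \<longrightarrow> \<eta> \<le> e \<longrightarrow>
    moments_close D g d \<eta> n S \<longrightarrow> triplet_recovers D g d y q n (M * \<eta>) S)"
proof -
  define Z where "Z = {(n, \<eta>, S). 0 \<le> \<eta> \<and> moments_close D g d \<eta> n S}"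
  let ?acc = "\<lambda>i. (cprob D y (\<lambda>s. g (lab_a s) i = 1), cprob D y (\<lambda>s. g (lab_b s) i = 1),
    cprob D y (\<lambda>s. g (lab_c s) i = 1))"
  let ?est = "\<lambda>i w. triplet_est g q (fst w) (\<lambda>j. snd (snd (snd w) j)) i
    (sgn (cprob D y (\<lambda>s. g (lab_a s) i = 1) - measure_pmf.prob D {s. g (lab_a s) i = 1}))"
  have nonneg: "\<And>w. w \<in> Z \<Longrightarrow> 0 \<le> fst (snd w)"
    by (auto simp: Z_def)
  have approx: "approx_lin Z (\<lambda>w. fst (snd w)) (?est i) (?acc i)" if "i \<in> {..<d}" for i
  proof (rule approx_lin_triplet_est[OF _ _ _ _ nonneg])
    fix w P
    assume "w \<in> Z" "P \<in> coord_events g i"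
    then show "\<bar>emp (fst w) (\<lambda>j. P (snd (snd w) j)) - measure_pmf.prob D {s. P s}\<bar> \<le> fst (snd w)"
      using that by (auto simp: Z_def moments_close_def)
  qed (use informative that in auto)
  from approx_lin_finite_uniform[of "{..<d}" Z "\<lambda>w. fst (snd w)" ?est ?acc, OF finite_lessThan approx nonneg]
  obtain M e where M: "0 \<le> M" "0 < e"
    "\<forall>w\<in>Z. fst (snd w) \<le> e \<longrightarrow> (\<forall>i\<in>{..<d}. norm (?est i w - ?acc i) \<le> M * fst (snd w))"
    by blast
  show ?thesis
  proof (rule exI[of _ M], rule exI[of _ e], intro conjI allI impI)
    fix n \<eta> S
    assume "0 \<le> \<eta>" "\<eta> \<le> e" "moments_close D g d \<eta> n S"
    then have "norm (?est i (n, \<eta>, S) - ?acc i) \<le> M * \<eta>" if "i < d" for i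
      using M(3) that by (auto simp: Z_def)
    then show "triplet_recovers D g d y q n (M * \<eta>) S"
      unfolding triplet_recovers_def Let_def by (auto intro!: abs_components_le_of_norm_le)
  qed (use M in auto)
qed

lemma prob_triplet_recovers_rate:
  fixes g :: "'y \<Rightarrow> nat \<Rightarrow> int"
  assumes informative: "\<forall>i<d.
      cprob D y (\<lambda>s. g (lab_a s) i = 1) \<noteq> measure_pmf.prob D {s. g (lab_a s) i = 1} \<and>
      cprob D y (\<lambda>s. g (lab_b s) i = 1) \<noteq> measure_pmf.prob D {s. g (lab_b s) i = 1} \<and>
      cprob D y (\<lambda>s. g (lab_c s) i = 1) \<noteq> measure_pmf.prob D {s. g (lab_c s) i = 1}"
  shows "\<exists>C>0. \<exists>\<epsilon>0>0. \<forall>n \<delta>. 0 < n \<longrightarrow> 0 < \<delta> \<longrightarrow> ln (2 * real d ^ 2 / \<delta>) / (2 * real n) \<le> \<epsilon>0 \<longrightarrow>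
    1 - \<delta> \<le> measure_pmf.prob (Pi_pmf {..<n} dflt (\<lambda>_. D))
      {S. triplet_recovers D g d y q n (C * (ln (2 * real d ^ 2 / \<delta>) / (2 * real n)) powr (1/4)) S}"
proof -
  obtain M e where M: "0 \<le> M" "0 < e" and error: "\<And>n \<eta> S. 0 \<le> \<eta> \<Longrightarrow> \<eta> \<le> e \<Longrightarrow>
      moments_close D g d \<eta> n S \<Longrightarrow> triplet_recovers D g d y q n (M * \<eta>) S"
    using triplet_est_uniform_error[OF informative] by blast
  have "1 - \<delta> \<le> measure_pmf.prob (Pi_pmf {..<n} dflt (\<lambda>_. D))
      {S. triplet_recovers D g d y q n ((2 * M + 1) * (ln (2 * real d ^ 2 / \<delta>) / (2 * real n)) powr (1/4)) S}"
    if n: "0 < n" and \<delta>: "0 < \<delta>" and small: "ln (2 * real d ^ 2 / \<delta>) / (2 * real n) \<le> min 1 ((e / 2)\<^sup>2)"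
    for n \<delta>
  proof (cases "\<delta> < 1")
    case True
    define t where "t = ln (2 * real d ^ 2 / \<delta>) / (2 * real n)"
    note rate = prob_moments_close_rate(1)[OF n \<delta> True, where d = d, folded t_def]
      prob_moments_close_rate(2)[OF n \<delta> True, where d = d and dflt = dflt and D = D and g = g,
        folded t_def]
    have "sqrt t \<le> sqrt ((e / 2)\<^sup>2)"
      using small by (intro real_sqrt_le_mono) (simp add: t_def)
    then have "2 * sqrt t \<le> e"
      using M(2) by simp
    moreover have "M * (2 * sqrt t) \<le> (2 * M + 1) * t powr (1/4)"
      using mult_sqrt_le_powr_quarter[OF M(1) rate(1)] small by (simp add: t_def)
    ultimately have subset: "{S. moments_close D g d (2 * sqrt t) n S}
        \<subseteq> {S. triplet_recovers D g d y q n ((2 * M + 1) * t powr (1/4)) S}"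
      using error[of "2 * sqrt t"] rate(1) by (auto intro: triplet_recovers_mono)
    show ?thesis
      using order_trans[OF rate(2) measure_pmf.finite_measure_mono[OF subset]] unfolding t_def by simp
  qed (simp add: order_trans[OF _ measure_nonneg])
  moreover have "0 < 2 * M + 1" "0 < min 1 ((e / 2)\<^sup>2)"
    using M by auto
  ultimately show ?thesis
    by blast
qed

end

theorem mainTheorem1:
  fixes D :: "('y \<times> 'y \<times> 'y \<times> 'y) pmf"
    and g :: "'y \<Rightarrow> nat \<Rightarrow> int"
    and dY :: "'y \<Rightarrow> 'y \<Rightarrow> real"
    and d :: nat and y1 y2 y :: 'y and p :: real
  assumes pm1: "\<forall>x i. i < d \<longrightarrow> g x i \<in> {-1, 1}"
    and inj: "\<forall>x x'. (\<forall>i<d. g x i = g x' i) \<longrightarrow> x = x'"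
    and isom: "\<forall>x x'. dY x x' = real (hamming d (g x) (g x'))"
    and y12: "y1 \<noteq> y2"
    and Yvals: "\<forall>s\<in>set_pmf D. lat s \<in> {y1, y2}"
    and p_def: "measure_pmf.prob D {s. lat s = y1} = p"
    and p_pos: "0 < p" and p_lt1: "p < 1"
    and CI: "cond_indep3 D"
    and y_in: "y \<in> {y1, y2}"
    and informative: "\<forall>i<d.
        cprob D y (\<lambda>s. g (lab_a s) i = 1) \<noteq> measure_pmf.prob D {s. g (lab_a s) i = 1} \<and>
        cprob D y (\<lambda>s. g (lab_b s) i = 1) \<noteq> measure_pmf.prob D {s. g (lab_b s) i = 1} \<and>
        cprob D y (\<lambda>s. g (lab_c s) i = 1) \<noteq> measure_pmf.prob D {s. g (lab_c s) i = 1}"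
  shows "\<exists>C>0. \<exists>\<epsilon>0>0. \<forall>n::nat. \<forall>\<delta>::real. n > 0 \<longrightarrow> \<delta> > 0 \<longrightarrow>
           ln (2 * real d ^ 2 / \<delta>) / (2 * real n) \<le> \<epsilon>0 \<longrightarrow>
           measure_pmf.prob (Pi_pmf {..<n} undefined (\<lambda>_. D))
             {S. \<forall>i<d.
                 (let p' = (if y = y1 then p else 1 - p);
                      \<alpha> = cprob D y (\<lambda>s. g (lab_a s) i = 1);
                      \<beta> = cprob D y (\<lambda>s. g (lab_b s) i = 1);
                      \<gamma> = cprob D y (\<lambda>s. g (lab_c s) i = 1);
                      sg = sgn (\<alpha> - measure_pmf.prob D {s. g (lab_a s) i = 1});
                      est = triplet_est g p' n (\<lambda>j. snd (S j)) i sg;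
                      bnd = C * (ln (2 * real d ^ 2 / \<delta>) / (2 * real n)) powr (1/4)
                  in \<bar>fst est - \<alpha>\<bar> \<le> bnd \<and> \<bar>fst (snd est) - \<beta>\<bar> \<le> bnd \<and>
                     \<bar>snd (snd est) - \<gamma>\<bar> \<le> bnd)}
             \<ge> 1 - \<delta>"
proof -
  interpret two_class_model D y "if y = y1 then y2 else y1" "if y = y1 then p else 1 - p"
    using CI y12 Yvals y_in p_pos p_lt1 prob_lat_other[OF y12 Yvals] by unfold_locales (auto simp: p_def)
  show ?thesis
    using prob_triplet_recovers_rate[OF informative, where dflt = undefined]
    unfolding triplet_recovers_def Let_def .
qed

end
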